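(* Let $m$ be a positive integer divisible by $4$. Then the group $BT(2,m)$ is infinite.
   Context: For integers $n,m\ge1$, $BT(n,m)$ denotes the quotient of the free group $\mathbb{F}_n$ on $n$ generators by the normal subgroup generated by all $x^m$, where $x$ runs over the primitive elements of $\mathbb{F}_n$ (elements belonging to some free basis). *)

theory Defs
  imports "HOL-Algebra.Algebra"
begin

text \<open>A letter (i, False) is the generator number i, (i, True) is its inverse.\<close>
type_synonym letter = "nat \<times> bool"

definition inv_letter :: "letter \<Rightarrow> letter" where
  "inv_letter x = (fst x, \<not> snd x)"

fun reduced :: "letter list \<Rightarrow> bool" where
  "reduced [] = True"
| "reduced [x] = True"
| "reduced (x # y # ys) = (y \<noteq> inv_letter x \<and> reduced (y # ys))"

fun red :: "letter list \<Rightarrow> letter list" where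
  "red [] = []"
| "red (x # xs) = (case red xs of
       [] \<Rightarrow> [x]
     | y # ys \<Rightarrow> (if y = inv_letter x then ys else x # y # ys))"

definition free_group :: "nat \<Rightarrow> letter list monoid" where
  "free_group n = \<lparr> carrier = {w. reduced w \<and> (\<forall>x\<in>set w. fst x < n)},
                    monoid.mult = (\<lambda>u v. red (u @ v)),
                    monoid.one = [] \<rparr>"

definition eval_word :: "('g, 'm) monoid_scheme \<Rightarrow> (nat \<Rightarrow> 'g) \<Rightarrow> letter list \<Rightarrow> 'g" where
  "eval_word G b w =
     foldr (\<lambda>x acc. (if snd x then inv\<^bsub>G\<^esub> (b (fst x)) else b (fst x)) \<otimes>\<^bsub>G\<^esub> acc) w \<one>\<^bsub>G\<^esub>"

definition free_basis :: "nat \<Rightarrow> nat \<Rightarrow> (nat \<Rightarrow> letter list) \<Rightarrow> bool" where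
  "free_basis n k b \<longleftrightarrow> (\<forall>i<k. b i \<in> carrier (free_group n)) \<and>
     bij_betw (eval_word (free_group n) b) (carrier (free_group k)) (carrier (free_group n))"

definition primitive :: "nat \<Rightarrow> letter list \<Rightarrow> bool" where
  "primitive n x \<longleftrightarrow> (\<exists>k b. free_basis n k b \<and> (\<exists>i<k. x = b i))"

definition normal_closure :: "('g, 'm) monoid_scheme \<Rightarrow> 'g set \<Rightarrow> 'g set" where
  "normal_closure G S =
     generate G {g \<otimes>\<^bsub>G\<^esub> s \<otimes>\<^bsub>G\<^esub> inv\<^bsub>G\<^esub> g | g s. g \<in> carrier G \<and> s \<in> S}"

definition BT :: "nat \<Rightarrow> nat \<Rightarrow> letter list set monoid" where
  "BT n m = free_group n Mod
     normal_closure (free_group n)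
       {x [^]\<^bsub>free_group n\<^esub> m | x. x \<in> carrier (free_group n) \<and> primitive n x}"

end

theory Submission
  imports Defs
begin

text \<open>Let \<open>F\<^sub>2 = \<langle>a, b\<rangle>\<close> act on the Lipschitz quaternions by affine maps
  \<open>x \<mapsto> v + g x\<close> with \<open>g\<close> a unit, sending \<open>a\<close> to \<open>x \<mapsto> i x\<close> and \<open>b\<close> to \<open>x \<mapsto> 1 + j x\<close>.
  Up to sign, the rotation part of the image of a word is \<open>i\<^sup>p j\<^sup>q\<close>, where \<open>p\<close> and \<open>q\<close> are
  the parities of its exponent sums. A primitive element has odd exponent sum in some
  generator (a free basis of \<open>F\<^sub>n\<close> maps onto a basis of \<open>(\<int>/2)\<^sup>n\<close>), so its rotation part is
  one of \<open>\<plusminus>i, \<plusminus>j, \<plusminus>k\<close>, whose square is \<open>-1\<close>; then its image has order dividing 4, and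
  the action factors through \<open>BT(2, m)\<close> when \<open>4 | m\<close>. Its image is infinite, since
  \<open>(b\<^sup>2 a\<^sup>2)\<^sup>n\<close> acts as the translation by \<open>n (1 + j)\<close>.\<close>

definition cancel_Cons :: "letter \<Rightarrow> letter list \<Rightarrow> letter list" where
  "cancel_Cons x z = (case z of [] \<Rightarrow> [x] | y # ys \<Rightarrow> (if y = inv_letter x then ys else x # y # ys))"

lemma red_Cons [simp]: "red (x # w) = cancel_Cons x (red w)"
  by (simp add: cancel_Cons_def)

declare red.simps(2) [simp del]

lemma inv_letter_inv_letter [simp]: "inv_letter (inv_letter x) = x"
  by (simp add: inv_letter_def)

lemma inv_letter_neq [simp]: "inv_letter x \<noteq> x" "x \<noteq> inv_letter x"
  by (auto simp: inv_letter_def prod_eq_iff)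

lemma reduced_ConsD: "reduced (x # w) \<Longrightarrow> reduced w"
  by (cases w) auto

lemma reduced_cancel_Cons: "reduced z \<Longrightarrow> reduced (cancel_Cons x z)"
  by (cases z) (auto simp: cancel_Cons_def dest: reduced_ConsD)

lemma reduced_red: "reduced (red w)"
  by (induction w) (auto simp: reduced_cancel_Cons)

lemma red_reduced: "reduced w \<Longrightarrow> red w = w"
proof (induction w)
  case (Cons x w)
  then have "red w = w" using reduced_ConsD by blast
  then show ?case using Cons.prems by (cases w) (auto simp: cancel_Cons_def)
qed simp

lemma red_red [simp]: "red (red w) = red w"
  by (simp add: red_reduced reduced_red)

lemma set_cancel_Cons: "set (cancel_Cons x z) \<subseteq> insert x (set z)"
  by (cases z) (auto simp: cancel_Cons_def)

lemma set_red_subset: "set (red w) \<subseteq> set w"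
  by (induction w) (use set_cancel_Cons in \<open>fastforce+\<close>)

lemma cancel_Cons_inv_letter: "reduced z \<Longrightarrow> cancel_Cons x (cancel_Cons (inv_letter x) z) = z"
  by (cases z; cases "tl z") (auto simp: cancel_Cons_def)

lemma red_append_red_left: "red (red u @ v) = red (u @ v)"
proof (induction u)
  case (Cons x u)
  have "red ((x # u) @ v) = cancel_Cons x (red (red u @ v))"
    using Cons.IH by simp
  also have "\<dots> = red (red (x # u) @ v)"
  proof (cases "red u")
    case (Cons y ys)
    then show ?thesis
      using cancel_Cons_inv_letter[OF reduced_red, of x "ys @ v"]
      by (auto simp: cancel_Cons_def)
  qed (simp add: cancel_Cons_def)
  finally show ?case by simp
qed simp

lemma red_append_red_right: "red (u @ red v) = red (u @ v)"
  by (induction u) auto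

definition inv_word :: "letter list \<Rightarrow> letter list" where
  "inv_word u = rev (map inv_letter u)"

lemma red_inv_word_append: "red (inv_word u @ u) = []"
proof (induction u rule: rev_induct)
  case (snoc x u)
  have "red (inv_word (u @ [x]) @ u @ [x]) = cancel_Cons (inv_letter x) (red ((inv_word u @ u) @ [x]))"
    by (simp add: inv_word_def)
  also have "\<dots> = cancel_Cons (inv_letter x) (red (red (inv_word u @ u) @ [x]))"
    by (simp only: red_append_red_left)
  also have "\<dots> = []"
    using snoc by (simp add: cancel_Cons_def)
  finally show ?case .
qed (simp add: inv_word_def)

lemma carrier_free_group: "carrier (free_group n) = {w. reduced w \<and> (\<forall>x\<in>set w. fst x < n)}"
  by (simp add: free_group_def)

lemma mult_free_group [simp]: "u \<otimes>\<^bsub>free_group n\<^esub> v = red (u @ v)"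
  by (simp add: free_group_def)

lemma one_free_group [simp]: "\<one>\<^bsub>free_group n\<^esub> = []"
  by (simp add: free_group_def)

lemma red_in_carrier_free_group: "\<forall>x\<in>set w. fst x < n \<Longrightarrow> red w \<in> carrier (free_group n)"
  using set_red_subset[of w] reduced_red[of w] by (auto simp: carrier_free_group)

lemma group_free_group: "group (free_group n)"
proof (rule groupI)
  fix x y assume "x \<in> carrier (free_group n)" "y \<in> carrier (free_group n)"
  then show "x \<otimes>\<^bsub>free_group n\<^esub> y \<in> carrier (free_group n)"
    using red_in_carrier_free_group[of "x @ y" n] by (auto simp: carrier_free_group)
next
  fix x y z
  show "x \<otimes>\<^bsub>free_group n\<^esub> y \<otimes>\<^bsub>free_group n\<^esub> z = x \<otimes>\<^bsub>free_group n\<^esub> (y \<otimes>\<^bsub>free_group n\<^esub> z)"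
    by (simp add: red_append_red_left red_append_red_right)
next
  fix x assume "x \<in> carrier (free_group n)"
  then show "\<one>\<^bsub>free_group n\<^esub> \<otimes>\<^bsub>free_group n\<^esub> x = x"
    by (simp add: carrier_free_group red_reduced)
  have "red (inv_word x) \<in> carrier (free_group n)"
    using \<open>x \<in> carrier (free_group n)\<close>
    by (intro red_in_carrier_free_group) (auto simp: carrier_free_group inv_word_def inv_letter_def)
  moreover have "red (inv_word x) \<otimes>\<^bsub>free_group n\<^esub> x = []"
    by (simp add: red_append_red_left red_inv_word_append)
  ultimately show "\<exists>y\<in>carrier (free_group n). y \<otimes>\<^bsub>free_group n\<^esub> x = \<one>\<^bsub>free_group n\<^esub>"
    by auto
qed (simp add: carrier_free_group)

definition eval_letter :: "('g, 'm) monoid_scheme \<Rightarrow> (nat \<Rightarrow> 'g) \<Rightarrow> letter \<Rightarrow> 'g" where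
  "eval_letter G b x = (if snd x then inv\<^bsub>G\<^esub> (b (fst x)) else b (fst x))"

lemma eval_word_Nil [simp]: "eval_word G b [] = \<one>\<^bsub>G\<^esub>"
  by (simp add: eval_word_def)

lemma eval_word_Cons [simp]: "eval_word G b (x # w) = eval_letter G b x \<otimes>\<^bsub>G\<^esub> eval_word G b w"
  by (simp add: eval_word_def eval_letter_def)

context group
begin

lemma eval_letter_closed: "b (fst x) \<in> carrier G \<Longrightarrow> eval_letter G b x \<in> carrier G"
  by (simp add: eval_letter_def)

lemma eval_word_closed: "\<forall>x\<in>set w. b (fst x) \<in> carrier G \<Longrightarrow> eval_word G b w \<in> carrier G"
  by (induction w) (auto simp: eval_letter_closed)

lemma eval_word_append:
  "\<forall>x\<in>set u. b (fst x) \<in> carrier G \<Longrightarrow> \<forall>x\<in>set v. b (fst x) \<in> carrier G \<Longrightarrow>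
   eval_word G b (u @ v) = eval_word G b u \<otimes> eval_word G b v"
  by (induction u) (auto simp: eval_letter_closed eval_word_closed m_assoc)

lemma eval_word_cancel_Cons:
  assumes "\<forall>y\<in>set (x # z). b (fst y) \<in> carrier G"
  shows "eval_word G b (cancel_Cons x z) = eval_letter G b x \<otimes> eval_word G b z"
proof (cases z)
  case (Cons y ys)
  show ?thesis
  proof (cases "y = inv_letter x")
    case True
    have "eval_letter G b x \<otimes> eval_letter G b y = \<one>"
      using True assms by (simp add: eval_letter_def inv_letter_def)
    then have "eval_letter G b x \<otimes> eval_word G b z = eval_word G b ys"
      using Cons assms by (simp add: m_assoc [symmetric] eval_letter_closed eval_word_closed)
    then show ?thesis using Cons True by (simp add: cancel_Cons_def)
  qed (simp add: Cons cancel_Cons_def)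
qed (use assms in \<open>simp add: cancel_Cons_def eval_letter_closed\<close>)

lemma eval_word_red: "\<forall>x\<in>set w. b (fst x) \<in> carrier G \<Longrightarrow> eval_word G b (red w) = eval_word G b w"
proof (induction w)
  case (Cons x w)
  then have "\<forall>y\<in>set (x # red w). b (fst y) \<in> carrier G"
    using set_red_subset[of w] by auto
  then show ?case using Cons by (simp add: eval_word_cancel_Cons)
qed simp

lemma eval_word_hom:
  assumes "\<forall>i<k. b i \<in> carrier G"
  shows "eval_word G b \<in> hom (free_group k) G"
proof (rule homI)
  fix x assume "x \<in> carrier (free_group k)"
  then show "eval_word G b x \<in> carrier G"
    using assms by (auto intro!: eval_word_closed simp: carrier_free_group)
next
  fix x y assume "x \<in> carrier (free_group k)" "y \<in> carrier (free_group k)"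
  then have "\<forall>z\<in>set x. b (fst z) \<in> carrier G" "\<forall>z\<in>set y. b (fst z) \<in> carrier G"
    using assms by (auto simp: carrier_free_group)
  moreover from this have "\<forall>z\<in>set (x @ y). b (fst z) \<in> carrier G"
    by auto
  ultimately show "eval_word G b (x \<otimes>\<^bsub>free_group k\<^esub> y) = eval_word G b x \<otimes> eval_word G b y"
    by (simp add: eval_word_red eval_word_append)
qed

end

section \<open>Parity of the exponent sums\<close>

definition gen_parity :: "nat \<Rightarrow> letter list \<Rightarrow> bool" where
  "gen_parity i w = odd (length (filter (\<lambda>x. fst x = i) w))"

lemma gen_parity_Nil [simp]: "gen_parity i [] = False"
  by (simp add: gen_parity_def)

lemma gen_parity_Cons [simp]: "gen_parity i (x # w) = ((fst x = i) \<noteq> gen_parity i w)"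
  by (simp add: gen_parity_def)

lemma gen_parity_append [simp]: "gen_parity i (u @ v) = (gen_parity i u \<noteq> gen_parity i v)"
  by (induction u) auto

lemma gen_parity_red [simp]: "gen_parity i (red w) = gen_parity i w"
proof (induction w)
  case (Cons x w)
  then show ?case
    by (cases "red w") (auto simp: cancel_Cons_def inv_letter_def)
qed simp

lemma odd_card_toggle:
  assumes "finite A"
  shows "odd (card {i\<in>A. (i = j) \<noteq> P i}) = ((j \<in> A) \<noteq> odd (card {i\<in>A. P i}))"
proof -
  have fin: "finite {i\<in>A. P i}" using assms by simp
  consider "j \<in> A" "P j" | "j \<in> A" "\<not> P j" | "j \<notin> A" by blast
  then show ?thesis
  proof cases
    case 1
    then have "{i\<in>A. (i = j) \<noteq> P i} = {i\<in>A. P i} - {j}" by auto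
    then show ?thesis using 1 fin card_gt_0_iff[of "{i\<in>A. P i}"] by auto
  next
    case 2
    then have "{i\<in>A. (i = j) \<noteq> P i} = insert j {i\<in>A. P i}" by auto
    then show ?thesis using 2 fin by simp
  next
    case 3
    then have "{i\<in>A. (i = j) \<noteq> P i} = {i\<in>A. P i}" by auto
    then show ?thesis using 3 by simp
  qed
qed

text \<open>\<open>\<chi>\<close> is a homomorphism \<open>F\<^sub>n \<rightarrow> \<int>/2\<close>, with \<open>\<int>/2\<close> modelled by \<open>bool\<close> under
  exclusive or.\<close>

lemma parity_character:
  fixes \<chi> :: "letter list \<Rightarrow> bool"
  assumes \<chi>_mult: "\<And>u v. u \<in> carrier (free_group n) \<Longrightarrow> v \<in> carrier (free_group n) \<Longrightarrow>
      \<chi> (red (u @ v)) = (\<chi> u \<noteq> \<chi> v)"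
    and w: "w \<in> carrier (free_group n)"
  shows "\<chi> w = odd (card {i. i < n \<and> \<chi> [(i, False)] \<and> gen_parity i w})"
proof -
  have nil: "\<chi> [] = False"
    using \<chi>_mult[of "[]" "[]"] by (simp add: carrier_free_group)
  have letter: "\<chi> [(j, s)] = \<chi> [(j, False)]" if "j < n" for j s
  proof -
    have "red ([(j, False)] @ [(j, True)]) = []"
      by (simp add: cancel_Cons_def inv_letter_def)
    then show ?thesis
      using \<chi>_mult[of "[(j, False)]" "[(j, True)]"] nil that
      by (cases s) (auto simp: carrier_free_group)
  qed
  from w show ?thesis
  proof (induction w)
    case (Cons x w)
    obtain j s where x: "x = (j, s)" by fastforce
    have j: "j < n" and w: "w \<in> carrier (free_group n)"
      using Cons.prems by (auto simp: x carrier_free_group dest: reduced_ConsD)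
    have "\<chi> (x # w) = \<chi> (red ([x] @ w))"
      using Cons.prems red_reduced[of "x # w"] by (simp add: carrier_free_group del: red_Cons)
    also have "\<dots> = (\<chi> [x] \<noteq> \<chi> w)"
      using j w by (intro \<chi>_mult) (simp_all add: x carrier_free_group)
    finally have step: "\<chi> (x # w) = (\<chi> [(j, False)] \<noteq> \<chi> w)"
      using letter[OF j, of s] by (simp add: x)
    let ?A = "{i. i < n \<and> \<chi> [(i, False)]}"
    have "{i. i < n \<and> \<chi> [(i, False)] \<and> gen_parity i (x # w)} = {i\<in>?A. (i = j) \<noteq> gen_parity i w}"
      and "{i. i < n \<and> \<chi> [(i, False)] \<and> gen_parity i w} = {i\<in>?A. gen_parity i w}"
      and "j \<in> ?A \<longleftrightarrow> \<chi> [(j, False)]"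
      using j by (auto simp: x)
    moreover have "finite ?A" by simp
    note odd_card_toggle[OF this, of j "\<lambda>i. gen_parity i w"]
    ultimately show ?case
      using step Cons.IH[OF w] by (simp only:)
  qed (simp add: nil)
qed

lemma primitive_gen_parity:
  assumes "primitive n x"
  obtains i where "i < n" "gen_parity i x"
proof -
  obtain k b i where fb: "free_basis n k b" and ik: "i < k" and xb: "x = b i"
    using assms unfolding primitive_def by blast
  interpret Fn: group "free_group n" by (rule group_free_group)
  interpret Fk: group "free_group k" by (rule group_free_group)
  let ?E = "eval_word (free_group n) b"
  have bij: "bij_betw ?E (carrier (free_group k)) (carrier (free_group n))"
    using fb by (simp add: free_basis_def)
  have "?E \<in> iso (free_group k) (free_group n)"
    using fb bij Fn.eval_word_hom[of k b] by (simp add: free_basis_def iso_def)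
  then have \<theta>: "inv_into (carrier (free_group k)) ?E \<in> iso (free_group n) (free_group k)"
    by (rule Fk.iso_set_sym)
  \<comment> \<open>parity of the \<open>i\<close>-th exponent sum with respect to the basis \<open>b\<close>; it is odd at \<open>b i\<close>\<close>
  define \<chi> where "\<chi> u = gen_parity i (inv_into (carrier (free_group k)) ?E u)" for u
  have \<chi>_mult: "\<chi> (red (u @ v)) = (\<chi> u \<noteq> \<chi> v)"
    if "u \<in> carrier (free_group n)" "v \<in> carrier (free_group n)" for u v
    using hom_mult[OF iso_imp_homomorphism[OF \<theta>] that] by (simp add: \<chi>_def)
  have bi: "b i \<in> carrier (free_group n)"
    using fb ik by (simp add: free_basis_def)
  have "\<chi> (b i)"
  proof -
    have "[(i, False)] \<in> carrier (free_group k)"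
      using ik by (simp add: carrier_free_group)
    then have "inv_into (carrier (free_group k)) ?E (?E [(i, False)]) = [(i, False)]"
      by (rule bij_betw_inv_into_left[OF bij])
    moreover have "?E [(i, False)] = b i"
      using bi by (simp add: carrier_free_group eval_letter_def red_reduced)
    ultimately show ?thesis by (simp add: \<chi>_def)
  qed
  then have "odd (card {j. j < n \<and> \<chi> [(j, False)] \<and> gen_parity j (b i)})"
    using parity_character[OF \<chi>_mult bi] by simp
  then have "{j. j < n \<and> \<chi> [(j, False)] \<and> gen_parity j (b i)} \<noteq> {}"
    by (intro notI) simp
  then show thesis
    using that xb by blast
qed

section \<open>The affine group of the Lipschitz quaternions\<close>

datatype quat = Quat int int int int

fun quat_add :: "quat \<Rightarrow> quat \<Rightarrow> quat" where
  "quat_add (Quat a b c d) (Quat a' b' c' d') = Quat (a + a') (b + b') (c + c') (d + d')"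

fun quat_mult :: "quat \<Rightarrow> quat \<Rightarrow> quat" where
  "quat_mult (Quat a b c d) (Quat a' b' c' d') =
     Quat (a * a' - b * b' - c * c' - d * d') (a * b' + b * a' + c * d' - d * c')
       (a * c' - b * d' + c * a' + d * b') (a * d' + b * c' - c * b' + d * a')"

fun quat_neg :: "quat \<Rightarrow> quat" where
  "quat_neg (Quat a b c d) = Quat (- a) (- b) (- c) (- d)"

fun quat_cnj :: "quat \<Rightarrow> quat" where
  "quat_cnj (Quat a b c d) = Quat a (- b) (- c) (- d)"

fun quat_norm :: "quat \<Rightarrow> int" where
  "quat_norm (Quat a b c d) = a * a + b * b + c * c + d * d"

fun quat_re :: "quat \<Rightarrow> int" where
  "quat_re (Quat a b c d) = a"

lemma quat_norm_mult: "quat_norm (quat_mult p q) = quat_norm p * quat_norm q"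
  by (cases p; cases q) (simp add: algebra_simps)

lemma quat_mult_assoc: "quat_mult (quat_mult p q) r = quat_mult p (quat_mult q r)"
  by (cases p; cases q; cases r) (simp add: algebra_simps)

lemma quat_mult_add_right: "quat_mult p (quat_add q r) = quat_add (quat_mult p q) (quat_mult p r)"
  by (cases p; cases q; cases r) (simp add: algebra_simps)

lemma quat_add_assoc: "quat_add (quat_add p q) r = quat_add p (quat_add q r)"
  by (cases p; cases q; cases r) (simp add: algebra_simps)

text \<open>The pair \<open>(v, g)\<close> stands for the affine map \<open>x \<mapsto> v + g x\<close>.\<close>

definition quat_affine :: "(quat \<times> quat) monoid" where
  "quat_affine = \<lparr> carrier = {(v, g). quat_norm g = 1},
     monoid.mult = (\<lambda>(v, g) (w, h). (quat_add v (quat_mult g w), quat_mult g h)),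
     monoid.one = (Quat 0 0 0 0, Quat 1 0 0 0) \<rparr>"

lemma carrier_quat_affine: "x \<in> carrier quat_affine \<longleftrightarrow> quat_norm (snd x) = 1"
  by (cases x) (simp add: quat_affine_def)

lemma mult_quat_affine [simp]:
  "(v, g) \<otimes>\<^bsub>quat_affine\<^esub> (w, h) = (quat_add v (quat_mult g w), quat_mult g h)"
  by (simp add: quat_affine_def)

lemma one_quat_affine: "\<one>\<^bsub>quat_affine\<^esub> = (Quat 0 0 0 0, Quat 1 0 0 0)"
  by (simp add: quat_affine_def)

lemma group_quat_affine: "group quat_affine"
proof (rule groupI)
  fix x y assume "x \<in> carrier quat_affine" "y \<in> carrier quat_affine"
  then show "x \<otimes>\<^bsub>quat_affine\<^esub> y \<in> carrier quat_affine"
    by (cases x; cases y) (simp add: carrier_quat_affine quat_norm_mult)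
next
  fix x y z
  show "x \<otimes>\<^bsub>quat_affine\<^esub> y \<otimes>\<^bsub>quat_affine\<^esub> z = x \<otimes>\<^bsub>quat_affine\<^esub> (y \<otimes>\<^bsub>quat_affine\<^esub> z)"
    by (cases x; cases y; cases z) (simp add: quat_mult_assoc quat_mult_add_right quat_add_assoc)
next
  fix x :: "quat \<times> quat"
  obtain v g where x: "x = (v, g)" by fastforce
  show "\<one>\<^bsub>quat_affine\<^esub> \<otimes>\<^bsub>quat_affine\<^esub> x = x"
    unfolding x one_quat_affine by (cases v; cases g) simp
  assume "x \<in> carrier quat_affine"
  then have "quat_norm g = 1" by (simp add: x carrier_quat_affine)
  then have "(quat_neg (quat_mult (quat_cnj g) v), quat_cnj g) \<in> carrier quat_affine"
    and "(quat_neg (quat_mult (quat_cnj g) v), quat_cnj g) \<otimes>\<^bsub>quat_affine\<^esub> x = \<one>\<^bsub>quat_affine\<^esub>"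
    unfolding x one_quat_affine carrier_quat_affine by (cases v; cases g; simp add: algebra_simps)+
  then show "\<exists>y\<in>carrier quat_affine. y \<otimes>\<^bsub>quat_affine\<^esub> x = \<one>\<^bsub>quat_affine\<^esub>" by blast
qed (simp add: one_quat_affine carrier_quat_affine)

interpretation quat_affine: group quat_affine
  by (rule group_quat_affine)

lemma inv_quat_affine:
  "quat_norm g = 1 \<Longrightarrow> inv\<^bsub>quat_affine\<^esub> (v, g) = (quat_neg (quat_mult (quat_cnj g) v), quat_cnj g)"
  by (rule quat_affine.inv_equality; cases v; cases g; simp add: carrier_quat_affine one_quat_affine algebra_simps)

text \<open>If \<open>g\<^sup>2 = -1\<close> then \<open>(v, g)\<^sup>2 = (v + g v, -1)\<close>, which is an involution.\<close>

lemma quat_affine_pow_four: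
  assumes "quat_norm g = 1" and "quat_re g = 0"
  shows "(v, g) [^]\<^bsub>quat_affine\<^esub> (4::nat) = \<one>\<^bsub>quat_affine\<^esub>"
proof -
  have "(v, g) \<in> carrier quat_affine"
    using assms by (simp add: carrier_quat_affine)
  then have "(v, g) [^]\<^bsub>quat_affine\<^esub> (4::nat)
      = ((v, g) \<otimes>\<^bsub>quat_affine\<^esub> (v, g)) \<otimes>\<^bsub>quat_affine\<^esub> ((v, g) \<otimes>\<^bsub>quat_affine\<^esub> (v, g))"
    by (simp add: numeral_eq_Suc quat_affine.m_assoc del: mult_quat_affine)
  also have "(v, g) \<otimes>\<^bsub>quat_affine\<^esub> (v, g) = (quat_add v (quat_mult g v), Quat (-1) 0 0 0)"
    using assms by (cases g) (simp add: algebra_simps)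
  also have "\<dots> \<otimes>\<^bsub>quat_affine\<^esub> \<dots> = \<one>\<^bsub>quat_affine\<^esub>"
    by (cases "quat_add v (quat_mult g v)") (simp add: one_quat_affine)
  finally show ?thesis .
qed

definition quat_gen :: "nat \<Rightarrow> quat \<times> quat" where
  "quat_gen i =
     (if i = 0 then (Quat 0 0 0 0, Quat 0 1 0 0)
      else if i = 1 then (Quat 1 0 0 0, Quat 0 0 1 0)
      else \<one>\<^bsub>quat_affine\<^esub>)"

lemma quat_gen_closed: "quat_gen i \<in> carrier quat_affine"
  by (simp add: quat_gen_def carrier_quat_affine one_quat_affine)

lemma eval_letter_quat_gen:
  "eval_letter quat_affine quat_gen x =
     (if fst x = 0 then (Quat 0 0 0 0, if snd x then Quat 0 (-1) 0 0 else Quat 0 1 0 0)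
      else if fst x = 1 then (if snd x then (Quat 0 0 1 0, Quat 0 0 (-1) 0) else (Quat 1 0 0 0, Quat 0 0 1 0))
      else (Quat 0 0 0 0, Quat 1 0 0 0))"
  by (simp add: eval_letter_def quat_gen_def inv_quat_affine one_quat_affine)

definition quat_unit_of_parity :: "bool \<Rightarrow> bool \<Rightarrow> quat" where
  "quat_unit_of_parity p q =
     (if \<not> p \<and> \<not> q then Quat 1 0 0 0 else if p \<and> \<not> q then Quat 0 1 0 0
      else if \<not> p \<and> q then Quat 0 0 1 0 else Quat 0 0 0 1)"

lemma snd_eval_word_quat_gen:
  fixes w :: "letter list"
  defines "u \<equiv> quat_unit_of_parity (gen_parity 0 w) (gen_parity 1 w)"
  shows "snd (eval_word quat_affine quat_gen w) \<in> {u, quat_neg u}"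
  unfolding u_def
proof (induction w)
  case (Cons x w)
  obtain v g where "eval_word quat_affine quat_gen w = (v, g)" by fastforce
  with Cons show ?case
    by (simp add: eval_letter_quat_gen split: if_splits)
      (auto simp: quat_unit_of_parity_def split: if_splits)
qed (simp add: one_quat_affine quat_unit_of_parity_def)

lemma eval_word_quat_gen_pow_four:
  assumes "primitive 2 x"
  shows "eval_word quat_affine quat_gen x [^]\<^bsub>quat_affine\<^esub> (4::nat) = \<one>\<^bsub>quat_affine\<^esub>"
proof -
  obtain v g where vg: "eval_word quat_affine quat_gen x = (v, g)" by fastforce
  have "(v, g) \<in> carrier quat_affine"
    using quat_affine.eval_word_closed[of x quat_gen] quat_gen_closed vg by simp
  then have "quat_norm g = 1" by (simp add: carrier_quat_affine)
  moreover have "quat_re g = 0"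
  proof -
    obtain i where "i < 2" "gen_parity i x"
      using primitive_gen_parity[OF assms] .
    then have "gen_parity 0 x \<or> gen_parity 1 x" by (auto simp: less_2_cases_iff)
    then show ?thesis
      using snd_eval_word_quat_gen[of x] vg by (auto simp: quat_unit_of_parity_def)
  qed
  ultimately show ?thesis
    using vg quat_affine_pow_four by simp
qed

lemma infinite_eval_word_quat_gen_image:
  "infinite (eval_word quat_affine quat_gen ` carrier (free_group 2))"
proof -
  define t :: "nat \<Rightarrow> letter list"
    where "t n = concat (replicate n [(1, False), (1, False), (0, False), (0, False)])" for n
  have eval_t: "eval_word quat_affine quat_gen (t n) = (Quat (int n) 0 (int n) 0, Quat 1 0 0 0)" for n
    by (induction n) (simp_all add: t_def eval_letter_quat_gen one_quat_affine)
  have "(Quat (int n) 0 (int n) 0, Quat 1 0 0 0) \<in> eval_word quat_affine quat_gen ` carrier (free_group 2)"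
    for n
  proof -
    have "red (t n) \<in> carrier (free_group 2)"
      by (rule red_in_carrier_free_group) (auto simp: t_def)
    moreover have "eval_word quat_affine quat_gen (red (t n)) = eval_word quat_affine quat_gen (t n)"
      by (rule quat_affine.eval_word_red) (simp add: quat_gen_closed)
    ultimately show ?thesis
      using eval_t by (metis image_eqI)
  qed
  then have "range (\<lambda>n. (Quat (int n) 0 (int n) 0, Quat 1 0 0 0))
      \<subseteq> eval_word quat_affine quat_gen ` carrier (free_group 2)"
    by auto
  moreover have "infinite (range (\<lambda>n. (Quat (int n) 0 (int n) 0, Quat 1 0 0 0)))"
    by (rule range_inj_infinite) (simp add: inj_def)
  ultimately show ?thesis
    using finite_subset by blast
qed

section \<open>Finite quotients of the free group\<close>

lemma (in group) normal_closure_normal: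
  assumes "S \<subseteq> carrier G"
  shows "normal_closure G S \<lhd> G"
  unfolding normal_closure_def
proof (rule normal_generateI)
  show "{g \<otimes> s \<otimes> inv g |g s. g \<in> carrier G \<and> s \<in> S} \<subseteq> carrier G"
    using assms by auto
next
  fix c h assume "c \<in> {g \<otimes> s \<otimes> inv g |g s. g \<in> carrier G \<and> s \<in> S}" "h \<in> carrier G"
  then obtain g s where "c = g \<otimes> s \<otimes> inv g" "g \<in> carrier G" "s \<in> S"
    by blast
  with \<open>h \<in> carrier G\<close> assms have "h \<otimes> c \<otimes> inv h = (h \<otimes> g) \<otimes> s \<otimes> inv (h \<otimes> g)"
    by (auto simp: m_assoc inv_mult_group)
  then show "h \<otimes> c \<otimes> inv h \<in> {g \<otimes> s \<otimes> inv g |g s. g \<in> carrier G \<and> s \<in> S}"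
    using \<open>h \<in> carrier G\<close> \<open>g \<in> carrier G\<close> \<open>s \<in> S\<close> by blast
qed

lemma (in group_hom) normal_closure_subset_kernel:
  assumes "S \<subseteq> kernel G H h"
  shows "normal_closure G S \<subseteq> kernel G H h"
  unfolding normal_closure_def
proof (rule G.generate_subgroup_incl[OF _ subgroup_kernel])
  show "{g \<otimes>\<^bsub>G\<^esub> s \<otimes>\<^bsub>G\<^esub> inv\<^bsub>G\<^esub> g |g s. g \<in> carrier G \<and> s \<in> S} \<subseteq> kernel G H h"
    using assms normal.inv_op_closed2[OF normal_kernel] by blast
qed

lemma (in group_hom) finite_image_if_finite_FactGroup:
  assumes "N \<lhd> G" and "N \<subseteq> kernel G H h" and "finite (carrier (G Mod N))"
  shows "finite (h ` carrier G)"
proof -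
  obtain f where "\<And>x. x \<in> carrier G \<Longrightarrow> f (N #>\<^bsub>G\<^esub> x) = h x"
    using FactGroup_universal_kernel[OF assms(1,2)] by metis
  then have "h ` carrier G = f ` carrier (G Mod N)"
    by (simp add: carrier_FactGroup image_image)
  then show ?thesis
    using assms(3) by simp
qed

lemma finite_image_if_finite_BT:
  assumes "group_hom (free_group n) H h"
    and "\<And>x. primitive n x \<Longrightarrow> x \<in> carrier (free_group n) \<Longrightarrow> h x [^]\<^bsub>H\<^esub> m = \<one>\<^bsub>H\<^esub>"
    and "finite (carrier (BT n m))"
  shows "finite (h ` carrier (free_group n))"
proof -
  interpret group_hom "free_group n" H h by (rule assms(1))
  let ?S = "{x [^]\<^bsub>free_group n\<^esub> m | x. x \<in> carrier (free_group n) \<and> primitive n x}"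
  have S: "?S \<subseteq> kernel (free_group n) H h"
    using assms(2) by (auto simp: kernel_def hom_nat_pow)
  show ?thesis
  proof (rule finite_image_if_finite_FactGroup)
    show "normal_closure (free_group n) ?S \<lhd> free_group n"
      using S by (intro G.normal_closure_normal) (auto simp: kernel_def)
    show "normal_closure (free_group n) ?S \<subseteq> kernel (free_group n) H h"
      using S by (rule normal_closure_subset_kernel)
    show "finite (carrier (free_group n Mod normal_closure (free_group n) ?S))"
      using assms(3) by (simp add: BT_def)
  qed
qed

theorem proposition6p1:
  fixes m :: nat
  assumes "m > 0" and "4 dvd m"
  shows "infinite (carrier (BT 2 m))"
proof
  let ?h = "eval_word quat_affine quat_gen"
  have "group_hom (free_group 2) quat_affine ?h"
    using quat_affine.eval_word_hom[of 2 quat_gen] quat_gen_closed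
    by (simp add: group_hom_def group_hom_axioms_def group_free_group quat_affine.group_axioms)
  moreover have "?h x [^]\<^bsub>quat_affine\<^esub> m = \<one>\<^bsub>quat_affine\<^esub>" if "primitive 2 x" for x
  proof -
    obtain k where "m = 4 * k" using assms(2) by blast
    then show ?thesis
      using eval_word_quat_gen_pow_four[OF that] quat_affine.nat_pow_pow[symmetric, of "?h x" 4 k]
        quat_affine.eval_word_closed[of x quat_gen] quat_gen_closed
      by simp
  qed
  moreover assume "finite (carrier (BT 2 m))"
  ultimately have "finite (?h ` carrier (free_group 2))"
    by (rule finite_image_if_finite_BT)
  then show False
    using infinite_eval_word_quat_gen_image by contradiction
qed

end
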